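(* Let $(A,B)$ be a Katsura pair. Then the KEP-action $(G_B,E_A)$ is contracting if and only if $\limsup_{n\to\infty}\left(\max_{\mu\in E^n_{A,\infty}}\frac{|B_\mu|}{A_\mu}\right)^{1/n}<1$.
   Context: Katsura pair: $N\in\mathbb{N}$, $A\in M_N(\mathbb{N})$ (nonnegative integers), $B\in M_N(\mathbb{Z})$ with $A_{ij}=0\Rightarrow B_{ij}=0$. Graph $E_A$: vertices $\{1,\dots,N\}$, edges $e_{i,j,m}$ ($0\le m<A_{ij}$), $r=i$, $s=j$; $B_e=B_{r(e)s(e)}$. For a path $\mu=e_{i_0,i_1,r_1}\cdots e_{i_{n-1},i_n,r_n}$, $A_\mu=\prod_tA_{i_ti_{t+1}}$, $B_\mu=\prod_tB_{i_ti_{t+1}}$. The group bundle $\mathbb{Z}\times E_A^0$ (elements $a_i^k$) acts by $a_i^k\cdot e_{i,j,m}=e_{i,j,\hat m}$, $a_i^k|_{e_{i,j,m}}=a_j^{\hat k}$ with $kB_{ij}+m=\hat kA_{ij}+\hat m$, $0\le\hat m<A_{ij}$, extended recursively to paths; $G_B$ is the faithful quotient and $(G_B,E_A)$ the KEP-action; $(G_B)_i$ its isotropy group at $i$. $E^0_{A,\infty}=\{i:(G_B)_i\text{ infinite}\}$, and $E_{A,\infty}$ is the subgraph with vertices $E^0_{A,\infty}$ and edges $\{e:s(e)\in E^0_{A,\infty},B_e\ne0\}$; $E^n_{A,\infty}$ its paths of length $n$. Contracting: there is a finite $F\subseteq G_B$ such that for every $g$ there is $n$ with $g|_\mu\in F$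 for all paths $\mu\in d(g)E_A^k$, $k\ge n$. *)

theory Defs
  imports Complex_Main "HOL-Library.Extended_Real" "HOL-Library.Liminf_Limsup"
begin

text \<open>Katsura pairs. Vertices are 0,...,N-1 (0-based). Matrices are functions
  A :: nat => nat => nat and B :: nat => nat => int; only entries with indices below N matter.\<close>

definition katsura_pair :: "nat \<Rightarrow> (nat \<Rightarrow> nat \<Rightarrow> nat) \<Rightarrow> (nat \<Rightarrow> nat \<Rightarrow> int) \<Rightarrow> bool" where
  "katsura_pair N A B \<longleftrightarrow> (\<forall>i<N. \<forall>j<N. A i j = 0 \<longrightarrow> B i j = 0)"

text \<open>An edge e_{i,j,m} is the triple (i,j,m); range r(e) = i, source s(e) = j.\<close>
type_synonym edge = "nat \<times> nat \<times> nat"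

definition rg :: "edge \<Rightarrow> nat" where "rg e = fst e"
definition sc :: "edge \<Rightarrow> nat" where "sc e = fst (snd e)"

definition edges :: "nat \<Rightarrow> (nat \<Rightarrow> nat \<Rightarrow> nat) \<Rightarrow> edge set" where
  "edges N A = {(i,j,m). i < N \<and> j < N \<and> m < A i j}"

definition composable :: "edge list \<Rightarrow> bool" where
  "composable \<mu> \<longleftrightarrow> (\<forall>t. Suc t < length \<mu> \<longrightarrow> sc (\<mu> ! t) = rg (\<mu> ! Suc t))"

text \<open>Paths of length n in E_A starting (in the range sense) at vertex i: the set iE_A^n.
  For n = 0 this is the vertex i, represented by the empty list.\<close>
definition paths_from :: "nat \<Rightarrow> (nat \<Rightarrow> nat \<Rightarrow> nat) \<Rightarrow> nat \<Rightarrow> nat \<Rightarrow> edge list set" where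
  "paths_from N A i n = {\<mu>. length \<mu> = n \<and> set \<mu> \<subseteq> edges N A \<and> composable \<mu> \<and>
       (\<mu> \<noteq> [] \<longrightarrow> rg (hd \<mu>) = i)}"

text \<open>Action of a_i^k on an edge e_{i,j,m}: k B_ij + m = khat A_ij + mhat with 0 <= mhat < A_ij.\<close>
definition edge_act :: "(nat \<Rightarrow> nat \<Rightarrow> nat) \<Rightarrow> (nat \<Rightarrow> nat \<Rightarrow> int) \<Rightarrow> int \<Rightarrow> edge \<Rightarrow> edge" where
  "edge_act A B k e = (case e of (i,j,m) \<Rightarrow>
      (i, j, nat ((k * B i j + int m) mod int (A i j))))"

definition edge_res :: "(nat \<Rightarrow> nat \<Rightarrow> nat) \<Rightarrow> (nat \<Rightarrow> nat \<Rightarrow> int) \<Rightarrow> int \<Rightarrow> edge \<Rightarrow> int" where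
  "edge_res A B k e = (case e of (i,j,m) \<Rightarrow> (k * B i j + int m) div int (A i j))"

fun path_act :: "(nat \<Rightarrow> nat \<Rightarrow> nat) \<Rightarrow> (nat \<Rightarrow> nat \<Rightarrow> int) \<Rightarrow> int \<Rightarrow> edge list \<Rightarrow> edge list" where
  "path_act A B k [] = []"
| "path_act A B k (e # \<mu>) = edge_act A B k e # path_act A B (edge_res A B k e) \<mu>"

fun path_res :: "(nat \<Rightarrow> nat \<Rightarrow> nat) \<Rightarrow> (nat \<Rightarrow> nat \<Rightarrow> int) \<Rightarrow> int \<Rightarrow> edge list \<Rightarrow> int" where
  "path_res A B k [] = k"
| "path_res A B k (e # \<mu>) = path_res A B (edge_res A B k e) \<mu>"

definition res_vertex :: "nat \<Rightarrow> edge list \<Rightarrow> nat" where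
  "res_vertex i \<mu> = (if \<mu> = [] then i else sc (last \<mu>))"

text \<open>Faithful quotient: a_i^k and a_i^k' are identified iff they act identically on iE_A^*.\<close>
definition same_act :: "nat \<Rightarrow> (nat \<Rightarrow> nat \<Rightarrow> nat) \<Rightarrow> (nat \<Rightarrow> nat \<Rightarrow> int) \<Rightarrow> nat \<Rightarrow> int \<Rightarrow> int \<Rightarrow> bool" where
  "same_act N A B i k k' \<longleftrightarrow>
     (\<forall>n. \<forall>\<mu>\<in>paths_from N A i n. path_act A B k \<mu> = path_act A B k' \<mu>)"

text \<open>The element of G_B represented by a_i^k (its equivalence class).\<close>
definition gclass :: "nat \<Rightarrow> (nat \<Rightarrow> nat \<Rightarrow> nat) \<Rightarrow> (nat \<Rightarrow> nat \<Rightarrow> int) \<Rightarrow> nat \<Rightarrow> int \<Rightarrow> (nat \<times> int) set" where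
  "gclass N A B i k = {(i, k') | k'. same_act N A B i k k'}"

definition GB :: "nat \<Rightarrow> (nat \<Rightarrow> nat \<Rightarrow> nat) \<Rightarrow> (nat \<Rightarrow> nat \<Rightarrow> int) \<Rightarrow> (nat \<times> int) set set" where
  "GB N A B = {gclass N A B i k | i k. i < N}"

definition isotropy :: "nat \<Rightarrow> (nat \<Rightarrow> nat \<Rightarrow> nat) \<Rightarrow> (nat \<Rightarrow> nat \<Rightarrow> int) \<Rightarrow> nat \<Rightarrow> (nat \<times> int) set set" where
  "isotropy N A B i = {gclass N A B i k | k. True}"

definition contracting :: "nat \<Rightarrow> (nat \<Rightarrow> nat \<Rightarrow> nat) \<Rightarrow> (nat \<Rightarrow> nat \<Rightarrow> int) \<Rightarrow> bool" where
  "contracting N A B \<longleftrightarrow> (\<exists>F. F \<subseteq> GB N A B \<and> finite F \<and>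
     (\<forall>i<N. \<forall>k. \<exists>n. \<forall>l\<ge>n. \<forall>\<mu>\<in>paths_from N A i l.
        gclass N A B (res_vertex i \<mu>) (path_res A B k \<mu>) \<in> F))"

definition Vinf :: "nat \<Rightarrow> (nat \<Rightarrow> nat \<Rightarrow> nat) \<Rightarrow> (nat \<Rightarrow> nat \<Rightarrow> int) \<Rightarrow> nat set" where
  "Vinf N A B = {i. i < N \<and> infinite (isotropy N A B i)}"

definition Einf :: "nat \<Rightarrow> (nat \<Rightarrow> nat \<Rightarrow> nat) \<Rightarrow> (nat \<Rightarrow> nat \<Rightarrow> int) \<Rightarrow> edge set" where
  "Einf N A B = {e \<in> edges N A. sc e \<in> Vinf N A B \<and> B (rg e) (sc e) \<noteq> 0}"

definition paths_inf :: "nat \<Rightarrow> (nat \<Rightarrow> nat \<Rightarrow> nat) \<Rightarrow> (nat \<Rightarrow> nat \<Rightarrow> int) \<Rightarrow> nat \<Rightarrow> edge list set" where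
  "paths_inf N A B n = {\<mu>. length \<mu> = n \<and> set \<mu> \<subseteq> Einf N A B \<and> composable \<mu>}"

definition A_path :: "(nat \<Rightarrow> nat \<Rightarrow> nat) \<Rightarrow> edge list \<Rightarrow> nat" where
  "A_path A \<mu> = (\<Prod>e\<leftarrow>\<mu>. A (rg e) (sc e))"

definition B_path :: "(nat \<Rightarrow> nat \<Rightarrow> int) \<Rightarrow> edge list \<Rightarrow> int" where
  "B_path B \<mu> = (\<Prod>e\<leftarrow>\<mu>. B (rg e) (sc e))"

text \<open>max over E^n_{A,\<infinity>} of |B_\<mu>|/A_\<mu>; the maximum over the empty set is taken to be 0.\<close>
definition max_ratio :: "nat \<Rightarrow> (nat \<Rightarrow> nat \<Rightarrow> nat) \<Rightarrow> (nat \<Rightarrow> nat \<Rightarrow> int) \<Rightarrow> nat \<Rightarrow> real" where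
  "max_ratio N A B n = Max (insert 0
     ((\<lambda>\<mu>. real_of_int \<bar>B_path B \<mu>\<bar> / real (A_path A \<mu>)) ` paths_inf N A B n))"

end

theory Submission
  imports Defs
begin

text \<open>Both conditions are equivalent to: every cycle \<open>\<beta>\<close> of \<open>E\<^sub>A\<^sub>,\<^sub>\<infinity>\<close> has
  \<open>\<bar>B\<^sub>\<beta>\<bar> < A\<^sub>\<beta>\<close>. Cutting cycles out of long paths then gives
  \<open>\<bar>B\<^sub>\<mu>\<bar> / A\<^sub>\<mu> \<le> C \<rho>\<^bsup>\<bar>\<mu>\<bar>\<^esup>\<close> with \<open>\<rho> < 1\<close>, while the powers of a cycle with
  \<open>\<bar>B\<^sub>\<beta>\<bar> \<ge> A\<^sub>\<beta>\<close> keep the ratios \<open>\<ge> 1\<close> along a subsequence.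

  The restriction of \<open>a\<^sub>i\<^sup>k\<close> along an edge \<open>e\<close> has exponent
  \<open>(k B\<^sub>e + m) div A\<^sub>e\<close>, i.e. \<open>k B\<^sub>e / A\<^sub>e\<close> up to an error \<open>< 1\<close>. Inside \<open>E\<^sub>A\<^sub>,\<^sub>\<infinity>\<close>
  exponents therefore shrink geometrically up to a bounded error, and an edge leaving
  \<open>E\<^sub>A\<^sub>,\<^sub>\<infinity>\<close> either has \<open>B\<^sub>e = 0\<close> or ends at a vertex with finite isotropy group; both
  reset the exponent to a bounded range, which gives contraction. Conversely, choosing the
  digits \<open>m\<close> well along the powers of a cycle with \<open>\<bar>B\<^sub>\<beta>\<bar> \<ge> A\<^sub>\<beta>\<close> (whose base point has
  infinite isotropy) makes the exponents return to the base point without decreasing.\<close>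

section \<open>Paths and their weights\<close>

definition path_shape :: "edge list \<Rightarrow> (nat \<times> nat) list" where
  "path_shape \<mu> = map (\<lambda>e. (rg e, sc e)) \<mu>"

definition closed_path :: "edge list \<Rightarrow> bool" where
  "closed_path \<mu> \<longleftrightarrow> \<mu> \<noteq> [] \<and> rg (hd \<mu>) = sc (last \<mu>)"

lemma composable_Nil [simp]: "composable []"
  by (simp add: composable_def)

lemma composable_Cons:
  "composable (e # \<mu>) \<longleftrightarrow> (\<mu> \<noteq> [] \<longrightarrow> sc e = rg (hd \<mu>)) \<and> composable \<mu>"
  by (cases \<mu>) (auto simp: composable_def nth_Cons split: nat.splits)

lemma composable_append:
  "composable (\<mu> @ \<nu>) \<longleftrightarrow>
     composable \<mu> \<and> composable \<nu> \<and> (\<mu> \<noteq> [] \<longrightarrow> \<nu> \<noteq> [] \<longrightarrow> sc (last \<mu>) = rg (hd \<nu>))"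
  by (induction \<mu>) (auto simp: composable_Cons)

lemma composable_take: "composable \<mu> \<Longrightarrow> composable (take k \<mu>)"
  and composable_drop: "composable \<mu> \<Longrightarrow> composable (drop k \<mu>)"
  by (auto simp: composable_def)

lemma composable_iff_path_shape:
  "composable \<mu> \<longleftrightarrow>
     (\<forall>t. Suc t < length (path_shape \<mu>) \<longrightarrow> snd (path_shape \<mu> ! t) = fst (path_shape \<mu> ! Suc t))"
  by (simp add: composable_def path_shape_def)

lemma path_shape_eq_imp:
  assumes "path_shape \<mu> = path_shape \<nu>"
  shows "length \<mu> = length \<nu>" "composable \<mu> \<longleftrightarrow> composable \<nu>"
    and "\<mu> \<noteq> [] \<Longrightarrow> rg (hd \<mu>) = rg (hd \<nu>) \<and> sc (last \<mu>) = sc (last \<nu>)"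
proof -
  show "length \<mu> = length \<nu>"
    using arg_cong[OF assms, of length] by (simp add: path_shape_def)
  show "composable \<mu> \<longleftrightarrow> composable \<nu>"
    by (simp only: composable_iff_path_shape assms)
  assume "\<mu> \<noteq> []"
  moreover have "\<nu> \<noteq> []" using calculation assms by (auto simp: path_shape_def)
  ultimately show "rg (hd \<mu>) = rg (hd \<nu>) \<and> sc (last \<mu>) = sc (last \<nu>)"
    using arg_cong[OF assms, of hd] arg_cong[OF assms, of last]
    by (simp add: path_shape_def hd_map last_map)
qed

lemma finite_edges: "finite (edges N A)"
proof (rule finite_subset)
  show "edges N A \<subseteq> (\<Union>i<N. \<Union>j<N. (\<lambda>m. (i, j, m)) ` {..<A i j})"
    by (auto simp: edges_def)
qed auto

lemma edges_bounds: "e \<in> edges N A \<Longrightarrow> rg e < N \<and> sc e < N \<and> 0 < A (rg e) (sc e)"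
  by (cases e) (auto simp: edges_def rg_def sc_def)

definition edge_weight :: "(nat \<Rightarrow> nat \<Rightarrow> nat) \<Rightarrow> (nat \<Rightarrow> nat \<Rightarrow> int) \<Rightarrow> edge \<Rightarrow> real" where
  "edge_weight A B e = \<bar>B (rg e) (sc e)\<bar> / A (rg e) (sc e)"

definition path_weight :: "(nat \<Rightarrow> nat \<Rightarrow> nat) \<Rightarrow> (nat \<Rightarrow> nat \<Rightarrow> int) \<Rightarrow> edge list \<Rightarrow> real" where
  "path_weight A B \<mu> = \<bar>B_path B \<mu>\<bar> / A_path A \<mu>"

lemma path_weight_Nil [simp]: "path_weight A B [] = 1"
  by (simp add: path_weight_def A_path_def B_path_def)

lemma path_weight_Cons: "path_weight A B (e # \<mu>) = edge_weight A B e * path_weight A B \<mu>"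
  by (simp add: path_weight_def edge_weight_def A_path_def B_path_def abs_mult)

lemma path_weight_append: "path_weight A B (\<mu> @ \<nu>) = path_weight A B \<mu> * path_weight A B \<nu>"
  by (induction \<mu>) (simp_all add: path_weight_Cons)

lemma path_weight_nonneg: "0 \<le> path_weight A B \<mu>"
  by (simp add: path_weight_def)

section \<open>The self-similar action on paths\<close>

lemma edge_act_rg_sc [simp]: "rg (edge_act A B k e) = rg e" "sc (edge_act A B k e) = sc e"
  by (cases e, simp add: edge_act_def rg_def sc_def)+

lemma length_path_act [simp]: "length (path_act A B k \<mu>) = length \<mu>"
  by (induction \<mu> arbitrary: k) simp_all

lemma path_shape_path_act [simp]: "path_shape (path_act A B k \<mu>) = path_shape \<mu>"
  by (induction \<mu> arbitrary: k) (simp_all add: path_shape_def)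

lemma edge_act_edges: "e \<in> edges N A \<Longrightarrow> edge_act A B k e \<in> edges N A"
  by (cases e) (simp add: edges_def edge_act_def nat_less_iff)

lemma path_act_paths_from:
  assumes "\<mu> \<in> paths_from N A i n"
  shows "path_act A B k \<mu> \<in> paths_from N A i n"
proof -
  have "set (path_act A B k \<mu>) \<subseteq> edges N A" if "set \<mu> \<subseteq> edges N A" for k
    using that by (induction \<mu> arbitrary: k) (simp_all add: edge_act_edges)
  then show ?thesis
    using assms path_shape_eq_imp[OF path_shape_path_act[of A B k \<mu>]]
    by (auto simp: paths_from_def)
qed

lemma paths_from_edges: "\<mu> \<in> paths_from N A i n \<Longrightarrow> set \<mu> \<subseteq> edges N A"
  by (simp add: paths_from_def)

text \<open>Writing \<open>k\<^sub>2 B + m = q\<^sub>2 A + m\<^sub>2\<close> and \<open>k\<^sub>1 B + m\<^sub>2 = q\<^sub>1 A + m\<^sub>1\<close> gives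
  \<open>(k\<^sub>1 + k\<^sub>2) B + m = (q\<^sub>1 + q\<^sub>2) A + m\<^sub>1\<close>.\<close>
lemma edge_act_add:
  assumes "e \<in> edges N A"
  shows "edge_act A B (k1 + k2) e = edge_act A B k1 (edge_act A B k2 e)"
    and "edge_res A B (k1 + k2) e = edge_res A B k1 (edge_act A B k2 e) + edge_res A B k2 e"
proof -
  obtain i j m where e: "e = (i, j, m)" by (cases e)
  define a where "a = int (A i j)"
  define x where "x = k2 * B i j + int m"
  have "a > 0" using assms by (simp add: e edges_def a_def)
  then have act2: "edge_act A B k2 e = (i, j, nat (x mod a))"
    by (simp add: e edge_act_def x_def a_def)
  have "(k1 * B i j + x) div a = (k1 * B i j + x mod a) div a + x div a"
    using div_mult_self1[of a "k1 * B i j + x mod a" "x div a"] \<open>a > 0\<close> by (simp add: ac_simps)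
  with \<open>a > 0\<close> show "edge_act A B (k1 + k2) e = edge_act A B k1 (edge_act A B k2 e)"
    and "edge_res A B (k1 + k2) e = edge_res A B k1 (edge_act A B k2 e) + edge_res A B k2 e"
    by (simp_all add: act2 e edge_act_def edge_res_def x_def a_def[symmetric] algebra_simps
        mod_add_right_eq)
qed

lemma path_act_add:
  "set \<mu> \<subseteq> edges N A \<Longrightarrow> path_act A B (k1 + k2) \<mu> = path_act A B k1 (path_act A B k2 \<mu>)"
proof (induction \<mu> arbitrary: k1 k2)
  case (Cons e \<mu>)
  then show ?case
    using edge_act_add[of e N A B k1 k2] by simp
qed simp

lemma edge_act_zero: "e \<in> edges N A \<Longrightarrow> edge_act A B 0 e = e \<and> edge_res A B 0 e = 0"
  by (cases e) (auto simp: edges_def edge_act_def edge_res_def)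

lemma path_act_zero: "set \<mu> \<subseteq> edges N A \<Longrightarrow> path_act A B 0 \<mu> = \<mu>"
  by (induction \<mu>) (auto simp: edge_act_zero)

lemma path_act_append:
  "path_act A B k (\<mu> @ \<nu>) = path_act A B k \<mu> @ path_act A B (path_res A B k \<mu>) \<nu>"
  and path_res_append: "path_res A B k (\<mu> @ \<nu>) = path_res A B (path_res A B k \<mu>) \<nu>"
  by (induction \<mu> arbitrary: k) simp_all

section \<open>The faithful quotient\<close>

definition acts_trivially ::
  "nat \<Rightarrow> (nat \<Rightarrow> nat \<Rightarrow> nat) \<Rightarrow> (nat \<Rightarrow> nat \<Rightarrow> int) \<Rightarrow> nat \<Rightarrow> int \<Rightarrow> bool" where
  "acts_trivially N A B i d \<longleftrightarrow> (\<forall>n. \<forall>\<mu>\<in>paths_from N A i n. path_act A B d \<mu> = \<mu>)"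

lemma gclass_eq_iff_same_act: "gclass N A B i k = gclass N A B i k' \<longleftrightarrow> same_act N A B i k k'"
proof
  assume "gclass N A B i k = gclass N A B i k'"
  moreover have "(i, k') \<in> gclass N A B i k'"
    by (simp add: gclass_def same_act_def)
  ultimately have "(i, k') \<in> gclass N A B i k"
    by simp
  then show "same_act N A B i k k'"
    by (simp add: gclass_def)
qed (auto simp: gclass_def same_act_def)

lemma same_act_iff_acts_trivially: "same_act N A B i k k' \<longleftrightarrow> acts_trivially N A B i (k' - k)"
proof
  assume same: "same_act N A B i k k'"
  show "acts_trivially N A B i (k' - k)"
    unfolding acts_trivially_def
  proof (intro allI ballI)
    fix n \<nu> assume \<nu>: "\<nu> \<in> paths_from N A i n"
    then have E: "set \<nu> \<subseteq> edges N A" by (rule paths_from_edges)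
    have "path_act A B (k' - k) \<nu> = path_act A B k' (path_act A B (- k) \<nu>)"
      using path_act_add[OF E, of B k' "- k"] by simp
    also have "\<dots> = path_act A B k (path_act A B (- k) \<nu>)"
      using same path_act_paths_from[OF \<nu>, of B "- k"] by (simp add: same_act_def)
    also have "\<dots> = \<nu>"
      using path_act_add[OF E, of B k "- k", symmetric] path_act_zero[OF E] by simp
    finally show "path_act A B (k' - k) \<nu> = \<nu>" .
  qed
next
  assume triv: "acts_trivially N A B i (k' - k)"
  show "same_act N A B i k k'"
    unfolding same_act_def
  proof (intro allI ballI)
    fix n \<mu> assume \<mu>: "\<mu> \<in> paths_from N A i n"
    have "path_act A B k' \<mu> = path_act A B (k' - k) (path_act A B k \<mu>)"
      using path_act_add[OF paths_from_edges[OF \<mu>], of B "k' - k" k] by simp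
    also have "\<dots> = path_act A B k \<mu>"
      using triv path_act_paths_from[OF \<mu>, of B k] by (simp add: acts_trivially_def)
    finally show "path_act A B k \<mu> = path_act A B k' \<mu>" by simp
  qed
qed

lemma gclass_eq_iff_acts_trivially:
  "gclass N A B i k = gclass N A B i k' \<longleftrightarrow> acts_trivially N A B i (k' - k)"
  by (simp add: gclass_eq_iff_same_act same_act_iff_acts_trivially)

lemma acts_trivially_mult:
  assumes "acts_trivially N A B i d"
  shows "acts_trivially N A B i (z * d)"
proof -
  have step: "gclass N A B i k = gclass N A B i (k + d)" for k
    using assms by (simp add: gclass_eq_iff_acts_trivially)
  have "gclass N A B i 0 = gclass N A B i (z * d)"
  proof (induction z rule: int_induct[where k = 0])
    case (step1 z)
    then show ?case using step[of "z * d"] by (simp add: distrib_right)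
  next
    case (step2 z)
    then show ?case using step[of "(z - 1) * d"] by (simp add: left_diff_distrib)
  qed simp
  then show ?thesis
    by (simp add: gclass_eq_iff_acts_trivially)
qed

lemma gclass_mod:
  assumes "acts_trivially N A B i p"
  shows "gclass N A B i (k mod p) = gclass N A B i k"
  using acts_trivially_mult[OF assms, of "k div p"]
  by (simp add: gclass_eq_iff_acts_trivially minus_mod_eq_div_mult)

lemma isotropy_eq_range: "isotropy N A B i = range (gclass N A B i)"
  by (auto simp: isotropy_def)

lemma inj_gclass_if_infinite_isotropy:
  assumes "infinite (isotropy N A B i)"
  shows "inj (gclass N A B i)"
proof (rule injI, rule ccontr)
  fix k k' assume eq: "gclass N A B i k = gclass N A B i k'" and "k \<noteq> k'"
  define p where "p = \<bar>k' - k\<bar>"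
  have "p > 0" using \<open>k \<noteq> k'\<close> by (simp add: p_def)
  have triv: "acts_trivially N A B i p"
    using acts_trivially_mult[of N A B i "k' - k" "sgn (k' - k)"] eq
    by (simp add: gclass_eq_iff_acts_trivially p_def abs_sgn mult.commute[of "k' - k"])
  have "gclass N A B i k0 \<in> gclass N A B i ` {0..<p}" for k0
    using gclass_mod[OF triv, of k0] \<open>p > 0\<close>
    by (metis atLeastLessThan_iff image_eqI pos_mod_bound pos_mod_sign)
  then have "isotropy N A B i \<subseteq> gclass N A B i ` {0..<p}"
    by (auto simp: isotropy_eq_range)
  then show False
    using assms finite_subset by blast
qed

lemma finite_ranges_bounded_representatives:
  fixes f :: "'i \<Rightarrow> int \<Rightarrow> 'a"
  assumes "finite I" "\<And>i. i \<in> I \<Longrightarrow> finite (range (f i))"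
  shows "\<exists>P\<ge>0. \<forall>i\<in>I. \<forall>k. \<exists>k0. \<bar>k0\<bar> \<le> P \<and> f i k0 = f i k"
proof -
  define reps where "reps = insert 0 (\<Union>i\<in>I. inv (f i) ` range (f i))"
  have "finite reps"
    using assms by (simp add: reps_def)
  show ?thesis
  proof (rule exI[of _ "Max (abs ` reps)"], intro conjI ballI allI)
    show "0 \<le> Max (abs ` reps)"
      using \<open>finite reps\<close> by (intro Max_ge) (auto simp: reps_def)
    fix i k assume "i \<in> I"
    then have "inv (f i) (f i k) \<in> reps" "f i (inv (f i) (f i k)) = f i k"
      by (auto simp: reps_def f_inv_into_f)
    with \<open>finite reps\<close> show "\<exists>k0. \<bar>k0\<bar> \<le> Max (abs ` reps) \<and> f i k0 = f i k"
      by (intro exI[of _ "inv (f i) (f i k)"]) simp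
  qed
qed

lemma finite_isotropy_bounded_representatives:
  obtains P :: int where "0 \<le> P" "\<And>j k. j < N \<Longrightarrow> j \<notin> Vinf N A B \<Longrightarrow>
    \<exists>k0. \<bar>k0\<bar> \<le> P \<and> gclass N A B j k0 = gclass N A B j k"
proof -
  have "finite {j. j < N \<and> j \<notin> Vinf N A B}"
    by simp
  moreover have "finite (range (gclass N A B j))" if "j \<in> {j. j < N \<and> j \<notin> Vinf N A B}" for j
    using that by (simp add: Vinf_def flip: isotropy_eq_range)
  ultimately have "\<exists>P\<ge>0. \<forall>j\<in>{j. j < N \<and> j \<notin> Vinf N A B}. \<forall>k.
      \<exists>k0. \<bar>k0\<bar> \<le> P \<and> gclass N A B j k0 = gclass N A B j k"
    by (rule finite_ranges_bounded_representatives)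
  then obtain P where "0 \<le> P"
    and "\<forall>j\<in>{j. j < N \<and> j \<notin> Vinf N A B}. \<forall>k. \<exists>k0. \<bar>k0\<bar> \<le> P \<and> gclass N A B j k0 = gclass N A B j k"
    by blast
  then show ?thesis
    by (intro that[of P]) simp_all
qed

lemma bounded_if_inj_image_finite:
  fixes f :: "int \<Rightarrow> 'a"
  assumes "finite F" "inj f"
  obtains K where "0 < K" "\<And>k. f k \<in> F \<Longrightarrow> \<bar>k\<bar> < K"
proof
  define R where "R = insert 0 (abs ` (f -` F))"
  have "finite R"
    using assms by (simp add: R_def finite_vimageI)
  have "0 \<le> Max R"
    using \<open>finite R\<close> by (rule Max_ge) (simp add: R_def)
  then show "0 < Max R + 1"
    by simp
  fix k assume "f k \<in> F"
  then have "\<bar>k\<bar> \<le> Max R"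
    using \<open>finite R\<close> by (intro Max_ge) (simp_all add: R_def)
  then show "\<bar>k\<bar> < Max R + 1"
    by simp
qed

lemma res_vertex_Nil [simp]: "res_vertex i [] = i"
  by (simp add: res_vertex_def)

lemma paths_from_append:
  assumes "\<mu> \<in> paths_from N A i n" "\<nu> \<in> paths_from N A (res_vertex i \<mu>) n'"
  shows "\<mu> @ \<nu> \<in> paths_from N A i (n + n')"
  using assms by (cases "\<mu> = []") (auto simp: paths_from_def composable_append res_vertex_def)

lemma gclass_path_res_cong:
  assumes "gclass N A B i k = gclass N A B i k'" "\<mu> \<in> paths_from N A i n"
  shows "gclass N A B (res_vertex i \<mu>) (path_res A B k \<mu>) =
    gclass N A B (res_vertex i \<mu>) (path_res A B k' \<mu>)"
  unfolding gclass_eq_iff_same_act same_act_def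
proof (intro allI ballI)
  fix n' \<nu> assume "\<nu> \<in> paths_from N A (res_vertex i \<mu>) n'"
  then have "\<mu> @ \<nu> \<in> paths_from N A i (n + n')"
    by (rule paths_from_append[OF assms(2)])
  then have "path_act A B k (\<mu> @ \<nu>) = path_act A B k' (\<mu> @ \<nu>)"
    using assms(1) by (auto simp: gclass_eq_iff_same_act same_act_def)
  then show "path_act A B (path_res A B k \<mu>) \<nu> = path_act A B (path_res A B k' \<mu>) \<nu>"
    using append_eq_append_conv[of "path_act A B k \<mu>" "path_act A B k' \<mu>"]
    by (simp add: path_act_append)
qed

section \<open>Cycles of the subgraph \<open>E\<^sub>A\<^sub>,\<^sub>\<infinity>\<close>\<close>

definition cycles_shrink :: "nat \<Rightarrow> (nat \<Rightarrow> nat \<Rightarrow> nat) \<Rightarrow> (nat \<Rightarrow> nat \<Rightarrow> int) \<Rightarrow> bool" where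
  "cycles_shrink N A B \<longleftrightarrow>
     (\<forall>n. \<forall>\<beta>\<in>paths_inf N A B n. closed_path \<beta> \<longrightarrow> path_weight A B \<beta> < 1)"

lemma Einf_subset_edges: "Einf N A B \<subseteq> edges N A"
  by (auto simp: Einf_def)

lemma finite_paths_inf: "finite (paths_inf N A B n)"
proof (rule finite_subset)
  show "paths_inf N A B n \<subseteq> {\<mu>. set \<mu> \<subseteq> edges N A \<and> length \<mu> = n}"
    using Einf_subset_edges[of N A B] by (auto simp: paths_inf_def)
qed (rule finite_lists_length_eq[OF finite_edges])

lemma long_composable_path_has_cycle:
  assumes comp: "composable \<mu>" and bounded: "\<forall>e\<in>set \<mu>. rg e < N" and long: "N < length \<mu>"
  obtains \<alpha> \<beta> \<gamma> where "\<mu> = \<alpha> @ \<beta> @ \<gamma>" "closed_path \<beta>" "length \<beta> \<le> N"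
    "composable \<beta>" "composable (\<alpha> @ \<gamma>)"
proof -
  have "(\<lambda>t. rg (\<mu> ! t)) ` {..N} \<subseteq> {..<N}"
    using bounded long by auto
  then have "card ((\<lambda>t. rg (\<mu> ! t)) ` {..N}) < card {..N}"
    by (metis card_atMost card_lessThan card_mono finite_lessThan le_imp_less_Suc)
  then have "\<not> inj_on (\<lambda>t. rg (\<mu> ! t)) {..N}"
    by (rule pigeonhole)
  then obtain a b where ab: "a < b" "b \<le> N" "rg (\<mu> ! a) = rg (\<mu> ! b)"
    unfolding inj_on_def by (metis atMost_iff linorder_neqE_nat)
  define \<alpha> \<beta> \<gamma> where "\<alpha> = take a \<mu>" and "\<beta> = take (b - a) (drop a \<mu>)" and "\<gamma> = drop b \<mu>"
  have "\<mu> = \<alpha> @ \<beta> @ \<gamma>"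
    using take_add[of a "b - a" \<mu>] ab(1) append_take_drop_id[of b \<mu>]
    by (simp add: \<alpha>_def \<beta>_def \<gamma>_def)
  have step: "sc (\<mu> ! (t - 1)) = rg (\<mu> ! t)" if "0 < t" "t < length \<mu>" for t
    using comp that by (simp add: composable_def)
  have "closed_path \<beta>"
    using ab long step[of b] by (simp add: closed_path_def \<alpha>_def \<beta>_def \<gamma>_def hd_drop_conv_nth last_conv_nth)
  moreover have "composable (\<alpha> @ \<gamma>)"
  proof -
    have "sc (last \<alpha>) = rg (hd \<gamma>)" if "\<alpha> \<noteq> []"
      using that ab long step[of a] by (simp add: \<alpha>_def \<beta>_def \<gamma>_def last_conv_nth hd_drop_conv_nth)
    then show ?thesis
      using comp by (simp add: composable_append composable_take composable_drop \<alpha>_def \<beta>_def \<gamma>_def)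
  qed
  moreover have "length \<beta> \<le> N" "composable \<beta>"
    using ab comp by (simp_all add: \<alpha>_def \<beta>_def \<gamma>_def composable_take composable_drop)
  ultimately show ?thesis
    using that \<open>\<mu> = \<alpha> @ \<beta> @ \<gamma>\<close> by blast
qed

text \<open>A path longer than \<open>N\<close> contains a cycle, and cutting it out leaves a shorter path.\<close>
lemma path_weight_bound_from_short_paths:
  assumes short: "\<And>n \<mu>. \<mu> \<in> paths_inf N A B n \<Longrightarrow> n \<le> N \<Longrightarrow> path_weight A B \<mu> \<le> C * \<rho> ^ n"
    and cycles: "\<And>n \<beta>. \<beta> \<in> paths_inf N A B n \<Longrightarrow> closed_path \<beta> \<Longrightarrow> n \<le> N \<Longrightarrow>
      path_weight A B \<beta> \<le> \<rho> ^ n"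
  shows "\<mu> \<in> paths_inf N A B n \<Longrightarrow> path_weight A B \<mu> \<le> C * \<rho> ^ n"
proof (induction n arbitrary: \<mu> rule: less_induct)
  case (less n)
  show ?case
  proof (cases "n \<le> N")
    case False
    have "composable \<mu>"
      using less.prems by (simp add: paths_inf_def)
    moreover have "\<forall>e\<in>set \<mu>. rg e < N"
      using less.prems Einf_subset_edges[of N A B] edges_bounds by (fastforce simp: paths_inf_def)
    moreover have "N < length \<mu>"
      using less.prems False by (simp add: paths_inf_def)
    ultimately obtain \<alpha> \<beta> \<gamma> where decomp: "\<mu> = \<alpha> @ \<beta> @ \<gamma>" "closed_path \<beta>"
        "length \<beta> \<le> N" "composable \<beta>" "composable (\<alpha> @ \<gamma>)"
      by (rule long_composable_path_has_cycle)
    have "\<beta> \<in> paths_inf N A B (length \<beta>)" "\<alpha> @ \<gamma> \<in> paths_inf N A B (length (\<alpha> @ \<gamma>))"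
      using less.prems decomp by (auto simp: paths_inf_def)
    moreover have "length (\<alpha> @ \<gamma>) < n" "length (\<alpha> @ \<gamma>) + length \<beta> = n"
      using less.prems decomp by (auto simp: paths_inf_def closed_path_def)
    ultimately have "path_weight A B (\<alpha> @ \<gamma>) * path_weight A B \<beta> \<le>
        C * \<rho> ^ length (\<alpha> @ \<gamma>) * \<rho> ^ length \<beta>"
      using less.IH cycles decomp path_weight_nonneg
      by (intro mult_mono) (auto intro: order_trans[OF path_weight_nonneg])
    moreover have "path_weight A B \<mu> = path_weight A B (\<alpha> @ \<gamma>) * path_weight A B \<beta>"
      by (simp add: decomp(1) path_weight_append)
    moreover have "C * \<rho> ^ n = C * \<rho> ^ length (\<alpha> @ \<gamma>) * \<rho> ^ length \<beta>"
      by (metis \<open>length (\<alpha> @ \<gamma>) + length \<beta> = n\<close> mult.assoc power_add)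
    ultimately show ?thesis
      by linarith
  qed (use less.prems short in blast)
qed

lemma cycles_shrink_imp_geometric_decay:
  assumes "cycles_shrink N A B"
  obtains C \<rho> where "1 \<le> C" "0 < \<rho>" "\<rho> < 1"
    "\<And>n \<mu>. \<mu> \<in> paths_inf N A B n \<Longrightarrow> path_weight A B \<mu> \<le> C * \<rho> ^ n"
proof -
  define S where "S = (\<Union>n\<le>N. paths_inf N A B n)"
  define \<rho> where "\<rho> = Max (insert (1/2) ((\<lambda>\<beta>. root (length \<beta>) (path_weight A B \<beta>)) ` {\<beta>\<in>S. closed_path \<beta>}))"
  define C where "C = Max (insert 1 ((\<lambda>\<mu>. path_weight A B \<mu> / \<rho> ^ length \<mu>) ` S))"
  have "finite S"
    by (simp add: S_def finite_paths_inf)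
  have S_iff: "\<mu> \<in> S \<longleftrightarrow> \<mu> \<in> paths_inf N A B (length \<mu>) \<and> length \<mu> \<le> N" for \<mu>
    by (auto simp: S_def paths_inf_def)
  have "\<rho> \<ge> 1/2"
    using \<open>finite S\<close> unfolding \<rho>_def by (intro Max_ge) auto
  have "\<rho> < 1"
  proof -
    have "root (length \<beta>) (path_weight A B \<beta>) < 1" if "\<beta> \<in> S" "closed_path \<beta>" for \<beta>
      using that assms by (auto simp: cycles_shrink_def closed_path_def S_iff)
    then show ?thesis
      using \<open>finite S\<close> by (simp add: \<rho>_def)
  qed
  have "1 \<le> C"
    using \<open>finite S\<close> by (simp add: C_def)
  have cycles: "path_weight A B \<beta> \<le> \<rho> ^ n"
    if "\<beta> \<in> paths_inf N A B n" "closed_path \<beta>" "n \<le> N" for n \<beta>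
  proof -
    have "n > 0" "\<beta> \<in> S"
      using that by (auto simp: S_iff paths_inf_def closed_path_def)
    then have "root n (path_weight A B \<beta>) \<le> \<rho>"
      unfolding \<rho>_def using \<open>finite S\<close> that by (intro Max_ge) (auto simp: paths_inf_def)
    then show ?thesis
      using \<open>n > 0\<close> path_weight_nonneg
      by (metis power_mono real_root_ge_zero real_root_pow_pos2)
  qed
  have short: "path_weight A B \<mu> \<le> C * \<rho> ^ n"
    if "\<mu> \<in> paths_inf N A B n" "n \<le> N" for n \<mu>
  proof -
    have "path_weight A B \<mu> / \<rho> ^ n \<le> C"
      using that \<open>finite S\<close> by (auto simp: C_def S_iff paths_inf_def)
    then show ?thesis
      using \<open>\<rho> \<ge> 1/2\<close> by (simp add: divide_le_eq)
  qed
  show ?thesis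
  proof (rule that)
    show "0 < \<rho>"
      using \<open>\<rho> \<ge> 1/2\<close> by simp
    show "path_weight A B \<mu> \<le> C * \<rho> ^ n" if "\<mu> \<in> paths_inf N A B n" for n \<mu>
      using path_weight_bound_from_short_paths[of N A B C \<rho>, OF short cycles that] .
  qed fact+
qed

lemma concat_replicate_closed_path:
  assumes "closed_path \<beta>" "composable \<beta>" "0 < q"
  shows "composable (concat (replicate q \<beta>)) \<and> closed_path (concat (replicate q \<beta>)) \<and>
    hd (concat (replicate q \<beta>)) = hd \<beta>"
  using assms(3)
proof (induction q rule: nat_induct_non_zero)
  case (Suc q)
  then show ?case
    using assms(1,2) by (auto simp: composable_append closed_path_def)
qed (use assms in simp)

lemma path_weight_concat_replicate:
  "path_weight A B (concat (replicate q \<beta>)) = path_weight A B \<beta> ^ q"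
  by (induction q) (simp_all add: path_weight_append)

lemma concat_replicate_paths_inf:
  assumes "\<beta> \<in> paths_inf N A B n" "closed_path \<beta>" "0 < q"
  shows "concat (replicate q \<beta>) \<in> paths_inf N A B (q * n)"
  using assms concat_replicate_closed_path[OF assms(2) _ assms(3)]
  by (auto simp: paths_inf_def length_concat sum_list_replicate)

section \<open>The spectral condition on \<open>max_ratio\<close>\<close>

lemma path_weight_le_max_ratio:
  "\<mu> \<in> paths_inf N A B n \<Longrightarrow> path_weight A B \<mu> \<le> max_ratio N A B n"
  unfolding max_ratio_def path_weight_def using finite_paths_inf[of N A B n]
  by (intro Max_ge) auto

lemma max_ratio_le:
  assumes "\<And>\<mu>. \<mu> \<in> paths_inf N A B n \<Longrightarrow> path_weight A B \<mu> \<le> x" "0 \<le> x"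
  shows "max_ratio N A B n \<le> x"
  unfolding max_ratio_def using assms finite_paths_inf[of N A B n]
  by (auto simp: path_weight_def)

lemma limsup_root_max_ratio_ge_1:
  assumes "\<beta> \<in> paths_inf N A B n" "closed_path \<beta>" "1 \<le> path_weight A B \<beta>"
  shows "1 \<le> limsup (\<lambda>n. ereal (root n (max_ratio N A B n)))"
proof -
  have "n > 0"
    using assms(1,2) by (auto simp: paths_inf_def closed_path_def)
  define r where "r q = Suc q * n" for q
  have "strict_mono r"
    using \<open>n > 0\<close> by (intro strict_monoI) (simp add: r_def)
  have "1 \<le> max_ratio N A B (r q)" for q
  proof -
    have "1 \<le> path_weight A B \<beta> ^ Suc q"
      using assms(3) by (rule one_le_power)
    also have "\<dots> \<le> max_ratio N A B (r q)"
      using path_weight_le_max_ratio[OF concat_replicate_paths_inf[OF assms(1,2), of "Suc q"]]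
      by (simp add: r_def path_weight_append path_weight_concat_replicate)
    finally show ?thesis .
  qed
  then have "1 \<le> ereal (root (r q) (max_ratio N A B (r q)))" for q
    using \<open>n > 0\<close> by (simp add: r_def)
  then have "1 \<le> limsup (\<lambda>q. ereal (root (r q) (max_ratio N A B (r q))))"
    by (intro le_Limsup) (simp_all add: always_eventually)
  also have "\<dots> \<le> limsup (\<lambda>n. ereal (root n (max_ratio N A B n)))"
    using limsup_subseq_mono[OF \<open>strict_mono r\<close>] by (simp add: comp_def)
  finally show ?thesis .
qed

lemma limsup_root_max_ratio_lt_1:
  assumes "cycles_shrink N A B"
  shows "limsup (\<lambda>n. ereal (root n (max_ratio N A B n))) < 1"
proof -
  obtain C \<rho> where C: "1 \<le> C" "0 < \<rho>" "\<rho> < 1"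
    and decay: "\<And>n \<mu>. \<mu> \<in> paths_inf N A B n \<Longrightarrow> path_weight A B \<mu> \<le> C * \<rho> ^ n"
    using cycles_shrink_imp_geometric_decay[OF assms] by blast
  have "root n (max_ratio N A B n) \<le> root n C * \<rho>" if "1 \<le> n" for n
  proof -
    have "max_ratio N A B n \<le> C * \<rho> ^ n"
      using C decay by (intro max_ratio_le) simp_all
    then have "root n (max_ratio N A B n) \<le> root n (C * \<rho> ^ n)"
      using that by (subst real_root_le_iff) auto
    also have "\<dots> = root n C * \<rho>"
      using that C by (simp add: real_root_mult real_root_power_cancel)
    finally show ?thesis .
  qed
  then have "limsup (\<lambda>n. ereal (root n (max_ratio N A B n))) \<le> limsup (\<lambda>n. ereal (root n C * \<rho>))"
    by (intro Limsup_mono eventually_sequentiallyI[of 1]) simp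
  also have "\<dots> = ereal \<rho>"
  proof (rule lim_imp_Limsup)
    show "(\<lambda>n. ereal (root n C * \<rho>)) \<longlonglongrightarrow> ereal \<rho>"
      using LIMSEQ_root_const[of C] C by (auto intro!: tendsto_eq_intros lim_ereal[THEN iffD2])
  qed simp
  also have "\<dots> < 1"
    using C by simp
  finally show ?thesis .
qed

lemma limsup_root_max_ratio_lt_1_iff:
  "limsup (\<lambda>n. ereal (root n (max_ratio N A B n))) < 1 \<longleftrightarrow> cycles_shrink N A B"
proof
  assume lt: "limsup (\<lambda>n. ereal (root n (max_ratio N A B n))) < 1"
  show "cycles_shrink N A B"
    unfolding cycles_shrink_def
  proof (intro allI ballI impI)
    fix n \<beta> assume "\<beta> \<in> paths_inf N A B n" "closed_path \<beta>"
    then show "path_weight A B \<beta> < 1"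
      using limsup_root_max_ratio_ge_1[of \<beta> N A B n] lt by fastforce
  qed
qed (rule limsup_root_max_ratio_lt_1)

section \<open>Exponents of restrictions along paths\<close>

lemma edge_res_bound:
  assumes "e \<in> edges N A"
  shows "real_of_int \<bar>edge_res A B k e\<bar> \<le> real_of_int \<bar>k\<bar> * edge_weight A B e + 1"
proof -
  obtain i j m where e: "e = (i, j, m)" by (cases e)
  define a where "a = int (A i j)"
  define r where "r = (k * B i j + int m) div a"
  have "int m < a" using assms by (simp add: e edges_def a_def)
  then have "r * a + (k * B i j + int m) mod a = k * B i j + int m"
    "0 \<le> (k * B i j + int m) mod a" "(k * B i j + int m) mod a < a"
    by (simp_all add: r_def)
  then have "r * a \<le> \<bar>k * B i j\<bar> + a" "- (r * a) \<le> \<bar>k * B i j\<bar> + a"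
    using \<open>int m < a\<close> abs_ge_self[of "k * B i j"] abs_ge_minus_self[of "k * B i j"] by linarith+
  then have "\<bar>r\<bar> * a \<le> \<bar>k\<bar> * \<bar>B i j\<bar> + a"
    by (cases "r \<ge> 0") (simp_all add: abs_of_neg abs_mult)
  then have "real_of_int \<bar>r\<bar> * a \<le> \<bar>k\<bar> * \<bar>B i j\<bar> + a"
    by (metis of_int_le_iff of_int_mult)
  then have "\<bar>r\<bar> \<le> (\<bar>k\<bar> * \<bar>B i j\<bar> + a) / a"
    using \<open>int m < a\<close> by (simp add: pos_le_divide_eq)
  also have "\<dots> = \<bar>k\<bar> * (\<bar>B i j\<bar> / a) + 1"
    using \<open>int m < a\<close> by (simp add: add_divide_distrib)
  finally show ?thesis
    by (simp add: e edge_res_def edge_weight_def rg_def sc_def r_def a_def)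
qed

lemma exists_digit_with_large_carry:
  fixes x a :: int
  assumes "0 < a"
  shows "\<exists>m. 0 \<le> m \<and> m < a \<and> \<bar>x\<bar> \<le> \<bar>(x + m) div a\<bar> * a"
proof (cases "0 \<le> x")
  case True
  define m where "m = (- x) mod a"
  have "0 \<le> m" "m < a"
    using assms by (simp_all add: m_def)
  have "(x + m) mod a = (x + - x) mod a"
    unfolding m_def by (rule mod_add_right_eq)
  then have "(x + m) div a * a = x + m"
    using div_mult_mod_eq[of "x + m" a] by simp
  moreover have "0 \<le> (x + m) div a"
    using True \<open>0 \<le> m\<close> assms by (simp add: pos_imp_zdiv_nonneg_iff)
  ultimately show ?thesis
    using True \<open>0 \<le> m\<close> \<open>m < a\<close> by (intro exI[of _ m]) simp
next
  case False
  have "x div a * a \<le> x"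
    using div_mult_mod_eq[of x a] pos_mod_sign[OF assms, of x] by linarith
  moreover have "x div a < 0"
    using False assms by (simp add: pos_imp_zdiv_neg_iff)
  ultimately show ?thesis
    using False assms by (intro exI[of _ 0]) simp
qed

lemma exists_path_with_large_restriction:
  assumes "set \<beta> \<subseteq> edges N A"
  shows "\<exists>\<mu>. path_shape \<mu> = path_shape \<beta> \<and> set \<mu> \<subseteq> edges N A \<and>
    real_of_int \<bar>k\<bar> * path_weight A B \<beta> \<le> real_of_int \<bar>path_res A B k \<mu>\<bar>"
  using assms
proof (induction \<beta> arbitrary: k)
  case Nil
  then show ?case by (simp add: path_shape_def)
next
  case (Cons e \<beta>)
  obtain i j m where e: "e = (i, j, m)" by (cases e)
  define a where "a = int (A i j)"
  have "i < N" "j < N" "0 < a"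
    using Cons.prems by (auto simp: e edges_def a_def)
  then obtain m' where m': "0 \<le> m'" "m' < a" "\<bar>k * B i j\<bar> \<le> \<bar>(k * B i j + m') div a\<bar> * a"
    using exists_digit_with_large_carry by blast
  define e' where "e' = (i, j, nat m')"
  define k' where "k' = edge_res A B k e'"
  have e': "e' \<in> edges N A" "rg e' = rg e" "sc e' = sc e"
    using \<open>i < N\<close> \<open>j < N\<close> m' by (auto simp: e'_def e edges_def a_def rg_def sc_def)
  obtain \<mu> where \<mu>: "path_shape \<mu> = path_shape \<beta>" "set \<mu> \<subseteq> edges N A"
      "real_of_int \<bar>k'\<bar> * path_weight A B \<beta> \<le> real_of_int \<bar>path_res A B k' \<mu>\<bar>"
    using Cons.IH[of k'] Cons.prems by auto
  have "real_of_int \<bar>k\<bar> * edge_weight A B e \<le> real_of_int \<bar>k'\<bar>"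
  proof -
    have "real_of_int \<bar>k * B i j\<bar> \<le> \<bar>k'\<bar> * a"
      using m' by (simp add: k'_def e'_def edge_res_def a_def[symmetric] flip: of_int_mult of_int_abs)
    then show ?thesis
      using \<open>0 < a\<close> by (simp add: e edge_weight_def rg_def sc_def a_def abs_mult pos_divide_le_eq)
  qed
  then have "real_of_int \<bar>k\<bar> * path_weight A B (e # \<beta>) \<le> real_of_int \<bar>k'\<bar> * path_weight A B \<beta>"
    using path_weight_nonneg by (simp add: path_weight_Cons mult.assoc[symmetric] mult_right_mono)
  also have "\<dots> \<le> real_of_int \<bar>path_res A B k (e' # \<mu>)\<bar>"
    using \<mu>(3) by (simp add: k'_def)
  finally show ?case
    using \<mu>(1,2) e' by (intro exI[of _ "e' # \<mu>"]) (simp add: path_shape_def)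
qed

lemma path_res_bound_on_paths_inf:
  assumes decay: "\<And>n \<mu>. \<mu> \<in> paths_inf N A B n \<Longrightarrow> path_weight A B \<mu> \<le> C * \<rho> ^ n"
    and "0 \<le> C" "0 < \<rho>" "\<rho> < 1" and "\<mu> \<in> paths_inf N A B n"
  shows "real_of_int \<bar>path_res A B k \<mu>\<bar> \<le> real_of_int \<bar>k\<bar> * path_weight A B \<mu> + C / (1 - \<rho>)"
proof -
  have "real_of_int \<bar>path_res A B k \<mu>\<bar> \<le> real_of_int \<bar>k\<bar> * path_weight A B \<mu> + C * (\<Sum>s<n. \<rho> ^ s)"
    using assms(5)
  proof (induction \<mu> arbitrary: k n)
    case (Cons e \<mu>)
    define k' where "k' = edge_res A B k e"
    have \<mu>: "\<mu> \<in> paths_inf N A B (n - 1)" and n: "n = Suc (n - 1)" and "e \<in> edges N A"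
      using Cons.prems Einf_subset_edges[of N A B] by (auto simp: paths_inf_def composable_Cons)
    have "real_of_int \<bar>path_res A B k (e # \<mu>)\<bar> \<le>
        real_of_int \<bar>k'\<bar> * path_weight A B \<mu> + C * (\<Sum>s<n - 1. \<rho> ^ s)"
      using Cons.IH[OF \<mu>] by (simp add: k'_def)
    also have "\<dots> \<le> (real_of_int \<bar>k\<bar> * edge_weight A B e + 1) * path_weight A B \<mu> +
        C * (\<Sum>s<n - 1. \<rho> ^ s)"
      using edge_res_bound[OF \<open>e \<in> edges N A\<close>, of B k] path_weight_nonneg
      by (simp add: k'_def mult_right_mono)
    also have "\<dots> \<le> real_of_int \<bar>k\<bar> * path_weight A B (e # \<mu>) + C * \<rho> ^ (n - 1) +
        C * (\<Sum>s<n - 1. \<rho> ^ s)"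
      using decay[OF \<mu>] by (simp add: path_weight_Cons algebra_simps)
    also have "\<dots> = real_of_int \<bar>k\<bar> * path_weight A B (e # \<mu>) + C * (\<Sum>s<n. \<rho> ^ s)"
      by (subst n) (simp add: algebra_simps)
    finally show ?case .
  qed (simp add: paths_inf_def)
  also have "C * (\<Sum>s<n. \<rho> ^ s) \<le> C / (1 - \<rho>)"
  proof -
    have "(\<Sum>s<n. \<rho> ^ s) = (1 - \<rho> ^ n) / (1 - \<rho>)"
      using assms by (simp add: sum_gp_strict)
    also have "\<dots> \<le> 1 / (1 - \<rho>)"
      using assms by (simp add: divide_right_mono)
    finally show ?thesis
      using \<open>0 \<le> C\<close> by (metis mult_left_mono times_divide_eq_right mult_1_right)
  qed
  finally show ?thesis
    by simp
qed

section \<open>Contraction\<close>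

lemma paths_from_path_shape:
  assumes "path_shape \<mu> = path_shape \<nu>" "set \<mu> \<subseteq> edges N A" "\<nu> \<in> paths_from N A i n"
  shows "\<mu> \<in> paths_from N A i n" "res_vertex i \<mu> = res_vertex i \<nu>"
  using assms path_shape_eq_imp[OF assms(1)] by (auto simp: paths_from_def res_vertex_def)

lemma closed_path_in_paths_inf:
  assumes "\<beta> \<in> paths_inf N A B n" "closed_path \<beta>"
  shows "\<beta> \<in> paths_from N A (rg (hd \<beta>)) n" "res_vertex (rg (hd \<beta>)) \<beta> = rg (hd \<beta>)"
    "rg (hd \<beta>) \<in> Vinf N A B"
proof -
  have "\<beta> \<noteq> []" "rg (hd \<beta>) = sc (last \<beta>)" "set \<beta> \<subseteq> Einf N A B"
    using assms by (simp_all add: paths_inf_def closed_path_def)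
  then have "last \<beta> \<in> Einf N A B"
    by auto
  then show "rg (hd \<beta>) \<in> Vinf N A B"
    using \<open>rg (hd \<beta>) = sc (last \<beta>)\<close> by (simp add: Einf_def)
  show "\<beta> \<in> paths_from N A (rg (hd \<beta>)) n" "res_vertex (rg (hd \<beta>)) \<beta> = rg (hd \<beta>)"
    using assms(1) \<open>\<beta> \<noteq> []\<close> \<open>rg (hd \<beta>) = sc (last \<beta>)\<close> \<open>set \<beta> \<subseteq> Einf N A B\<close> Einf_subset_edges[of N A B]
    by (simp_all add: paths_inf_def paths_from_def res_vertex_def)
qed

lemma exists_return_path_with_large_restriction:
  assumes \<beta>: "\<beta> \<in> paths_inf N A B n" "closed_path \<beta>" "1 \<le> path_weight A B \<beta>"
  shows "\<exists>\<mu>. \<mu> \<in> paths_from N A (rg (hd \<beta>)) (Suc q * n) \<and> res_vertex (rg (hd \<beta>)) \<mu> = rg (hd \<beta>) \<and>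
    \<bar>K\<bar> \<le> \<bar>path_res A B K \<mu>\<bar>"
proof -
  define \<gamma> where "\<gamma> = concat (replicate (Suc q) \<beta>)"
  have "composable \<beta>"
    using \<beta>(1) by (simp add: paths_inf_def)
  have \<gamma>: "\<gamma> \<in> paths_inf N A B (Suc q * n)" "closed_path \<gamma>" "hd \<gamma> = hd \<beta>"
    using concat_replicate_paths_inf[OF \<beta>(1,2), of "Suc q"]
      concat_replicate_closed_path[OF \<beta>(2) \<open>composable \<beta>\<close>, of "Suc q"]
    by (simp_all only: \<gamma>_def zero_less_Suc simp_thms)
  then have "set \<gamma> \<subseteq> edges N A"
    using Einf_subset_edges[of N A B] by (auto simp: paths_inf_def)
  then obtain \<mu> where \<mu>: "path_shape \<mu> = path_shape \<gamma>" "set \<mu> \<subseteq> edges N A"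
      "real_of_int \<bar>K\<bar> * path_weight A B \<gamma> \<le> real_of_int \<bar>path_res A B K \<mu>\<bar>"
    using exists_path_with_large_restriction[where k = K and B = B] by blast
  have "1 \<le> path_weight A B \<gamma>"
    using \<beta>(3) unfolding \<gamma>_def path_weight_concat_replicate by (intro one_le_power) simp
  then have "\<bar>K\<bar> \<le> \<bar>path_res A B K \<mu>\<bar>"
    using \<mu>(3) mult_left_mono[of 1 "path_weight A B \<gamma>" "real_of_int \<bar>K\<bar>"] by simp
  moreover have "\<mu> \<in> paths_from N A (rg (hd \<beta>)) (Suc q * n)"
    "res_vertex (rg (hd \<beta>)) \<mu> = rg (hd \<beta>)"
    using paths_from_path_shape[OF \<mu>(1,2)] closed_path_in_paths_inf[OF \<gamma>(1,2)] \<gamma>(3) by simp_all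
  ultimately show ?thesis
    by blast
qed

text \<open>At a vertex \<open>j\<close> with infinite isotropy \<open>gclass j\<close> is injective, so a finite \<open>F\<close>
  bounds the exponents of the elements \<open>a\<^sub>j\<^sup>k\<close> it contains; powers of a cycle of
  weight \<open>\<ge> 1\<close> at \<open>j\<close> produce restrictions beyond any such bound.\<close>
lemma contracting_imp_cycles_shrink:
  assumes "contracting N A B"
  shows "cycles_shrink N A B"
proof (unfold cycles_shrink_def, intro allI ballI impI, rule ccontr)
  fix n \<beta> assume \<beta>: "\<beta> \<in> paths_inf N A B n" "closed_path \<beta>" "\<not> path_weight A B \<beta> < 1"
  obtain F where "finite F"
    and absorb: "\<And>i k. i < N \<Longrightarrow> \<exists>l0. \<forall>l\<ge>l0. \<forall>\<mu>\<in>paths_from N A i l.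
        gclass N A B (res_vertex i \<mu>) (path_res A B k \<mu>) \<in> F"
    using assms unfolding contracting_def by blast
  define j where "j = rg (hd \<beta>)"
  have "j \<in> Vinf N A B"
    using closed_path_in_paths_inf[OF \<beta>(1,2)] by (simp add: j_def)
  then have "j < N" "inj (gclass N A B j)"
    by (simp_all add: Vinf_def inj_gclass_if_infinite_isotropy)
  then obtain K where "0 < K" and K_bound: "\<And>k. gclass N A B j k \<in> F \<Longrightarrow> \<bar>k\<bar> < K"
    using bounded_if_inj_image_finite[OF \<open>finite F\<close>] by blast
  obtain l0 where l0: "\<forall>l\<ge>l0. \<forall>\<mu>\<in>paths_from N A j l.
      gclass N A B (res_vertex j \<mu>) (path_res A B K \<mu>) \<in> F"
    using absorb[OF \<open>j < N\<close>] by blast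
  obtain \<mu> where \<mu>: "\<mu> \<in> paths_from N A j (Suc l0 * n)" "res_vertex j \<mu> = j"
    "\<bar>K\<bar> \<le> \<bar>path_res A B K \<mu>\<bar>"
    using exists_return_path_with_large_restriction[OF \<beta>(1,2), of l0 K] \<beta>(3) by (auto simp: j_def)
  have "1 \<le> n"
    using \<beta>(1,2) by (auto simp: paths_inf_def closed_path_def Suc_le_eq)
  then have "l0 \<le> Suc l0 * n"
    using mult_le_mono2[of 1 n "Suc l0"] by simp
  with l0 \<mu>(1,2) have "gclass N A B j (path_res A B K \<mu>) \<in> F"
    by metis
  then show False
    using K_bound \<mu>(3) \<open>0 < K\<close> by fastforce
qed

lemma paths_from_split:
  assumes "\<nu> @ e # \<eta> \<in> paths_from N A i n"
  shows "e \<in> edges N A" "\<eta> \<in> paths_from N A (sc e) (length \<eta>)"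
    "res_vertex i (\<nu> @ e # \<eta>) = res_vertex (sc e) \<eta>"
  using assms by (auto simp: paths_from_def composable_append composable_Cons res_vertex_def)

lemma res_vertex_less:
  assumes "\<mu> \<in> paths_from N A i n" "i < N"
  shows "res_vertex i \<mu> < N"
proof (cases "\<mu> = []")
  case False
  then have "last \<mu> \<in> edges N A"
    using assms(1) by (auto simp: paths_from_def)
  then show ?thesis
    using False edges_bounds by (simp add: res_vertex_def)
qed (use assms in simp)

lemma gclass_edge_res_outside_Einf:
  assumes "e \<in> edges N A" "e \<notin> Einf N A B" "0 \<le> P"
    and reps: "\<And>j k. j < N \<Longrightarrow> j \<notin> Vinf N A B \<Longrightarrow>
      \<exists>k0. \<bar>k0\<bar> \<le> P \<and> gclass N A B j k0 = gclass N A B j k"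
  shows "\<exists>k0. \<bar>k0\<bar> \<le> P \<and> gclass N A B (sc e) k0 = gclass N A B (sc e) (edge_res A B k e)"
proof (cases "sc e \<in> Vinf N A B")
  case True
  then have "B (rg e) (sc e) = 0"
    using assms(1,2) by (simp add: Einf_def)
  then have "edge_res A B k e = 0"
    using assms(1) by (cases e) (simp add: edges_def edge_res_def rg_def sc_def)
  then show ?thesis
    using \<open>0 \<le> P\<close> by (intro exI[of _ 0]) simp
next
  case False
  then show ?thesis
    using reps edges_bounds[OF assms(1)] by blast
qed

text \<open>Split a path after its last edge outside \<open>E\<^sub>A\<^sub>,\<^sub>\<infinity>\<close>: there the exponent is reset
  to one of size \<open>\<le> P\<close>, and on the remaining path inside \<open>E\<^sub>A\<^sub>,\<^sub>\<infinity>\<close> it grows by at most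
  \<open>C / (1 - \<rho>)\<close>. A path lying entirely in \<open>E\<^sub>A\<^sub>,\<^sub>\<infinity>\<close> is long enough to have shrunk \<open>k\<close>.\<close>
lemma restriction_has_bounded_representative:
  fixes P :: int and C \<rho> :: real
  assumes decay: "\<And>n \<mu>. \<mu> \<in> paths_inf N A B n \<Longrightarrow> path_weight A B \<mu> \<le> C * \<rho> ^ n"
    and "0 \<le> C" "0 < \<rho>" "\<rho> < 1" and "0 \<le> P"
    and reps: "\<And>j k. j < N \<Longrightarrow> j \<notin> Vinf N A B \<Longrightarrow>
      \<exists>k0. \<bar>k0\<bar> \<le> P \<and> gclass N A B j k0 = gclass N A B j k"
    and \<mu>: "\<mu> \<in> paths_from N A i l" and small: "real_of_int \<bar>k\<bar> * (C * \<rho> ^ l) \<le> 1"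
  shows "\<exists>k'. real_of_int \<bar>k'\<bar> \<le> P * C + C / (1 - \<rho>) + 1 \<and>
    gclass N A B (res_vertex i \<mu>) k' = gclass N A B (res_vertex i \<mu>) (path_res A B k \<mu>)"
proof (cases "set \<mu> \<subseteq> Einf N A B")
  case True
  then have "\<mu> \<in> paths_inf N A B l"
    using \<mu> by (simp add: paths_inf_def paths_from_def)
  then have "real_of_int \<bar>path_res A B k \<mu>\<bar> \<le> real_of_int \<bar>k\<bar> * (C * \<rho> ^ l) + C / (1 - \<rho>)"
    using path_res_bound_on_paths_inf[OF decay assms(2-4) \<open>\<mu> \<in> paths_inf N A B l\<close>, of k]
      decay[OF \<open>\<mu> \<in> paths_inf N A B l\<close>]
    by (smt (verit) mult_left_mono of_int_nonneg abs_ge_zero)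
  moreover have "0 \<le> P * C"
    using \<open>0 \<le> C\<close> \<open>0 \<le> P\<close> by simp
  ultimately show ?thesis
    using small by (intro exI[of _ "path_res A B k \<mu>"] conjI refl) linarith
next
  case False
  then obtain \<nu> e \<eta> where split: "\<mu> = \<nu> @ e # \<eta>" "e \<notin> Einf N A B" "set \<eta> \<subseteq> Einf N A B"
    using split_list_last_prop[of \<mu> "\<lambda>e. e \<notin> Einf N A B"] by blast
  note \<eta> = paths_from_split[OF \<mu>[unfolded split(1)]]
  define k1 where "k1 = edge_res A B (path_res A B k \<nu>) e"
  obtain k0 where k0: "\<bar>k0\<bar> \<le> P" "gclass N A B (sc e) k0 = gclass N A B (sc e) k1"
    using gclass_edge_res_outside_Einf[OF \<eta>(1) split(2) \<open>0 \<le> P\<close> reps] by (auto simp: k1_def)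
  have "\<eta> \<in> paths_inf N A B (length \<eta>)"
    using \<eta>(2) split(3) by (simp add: paths_inf_def paths_from_def)
  then have "real_of_int \<bar>path_res A B k0 \<eta>\<bar> \<le> real_of_int \<bar>k0\<bar> * path_weight A B \<eta> + C / (1 - \<rho>)"
    and "path_weight A B \<eta> \<le> C"
    using path_res_bound_on_paths_inf[OF decay assms(2-4)] decay assms(2-4)
    by (auto intro: order_trans[OF _ mult_left_le[of "\<rho> ^ length \<eta>" C]] simp: power_le_one)
  then have "real_of_int \<bar>path_res A B k0 \<eta>\<bar> \<le> P * C + C / (1 - \<rho>) + 1"
    using k0(1) path_weight_nonneg[of A B \<eta>] \<open>0 \<le> P\<close>
    by (smt (verit) mult_mono of_int_le_iff of_int_nonneg abs_ge_zero)
  moreover have "gclass N A B (res_vertex (sc e) \<eta>) (path_res A B k0 \<eta>) =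
      gclass N A B (res_vertex (sc e) \<eta>) (path_res A B k \<mu>)"
    using gclass_path_res_cong[OF k0(2) \<eta>(2)] by (simp add: split(1) path_res_append k1_def)
  ultimately show ?thesis
    using \<eta>(3) split(1) by auto
qed

lemma eventually_geometric_le_1:
  fixes \<rho> c :: real
  assumes "0 < \<rho>" "\<rho> < 1"
  shows "\<forall>\<^sub>F l in sequentially. c * \<rho> ^ l \<le> 1"
proof -
  have "(\<lambda>l. c * \<rho> ^ l) \<longlonglongrightarrow> 0"
    using assms by (intro tendsto_mult_right_zero LIMSEQ_power_zero) simp
  then show ?thesis
    by (rule eventually_mono[OF order_tendstoD(2)[of _ 0 _ 1]]) simp_all
qed

lemma cycles_shrink_imp_contracting:
  assumes "cycles_shrink N A B"
  shows "contracting N A B"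
proof -
  obtain C \<rho> where C: "1 \<le> C" "0 < \<rho>" "\<rho> < 1"
    and decay: "\<And>n \<mu>. \<mu> \<in> paths_inf N A B n \<Longrightarrow> path_weight A B \<mu> \<le> C * \<rho> ^ n"
    using cycles_shrink_imp_geometric_decay[OF assms] by blast
  obtain P :: int where "0 \<le> P" and reps: "\<And>j k. j < N \<Longrightarrow> j \<notin> Vinf N A B \<Longrightarrow>
      \<exists>k0. \<bar>k0\<bar> \<le> P \<and> gclass N A B j k0 = gclass N A B j k"
    by (rule finite_isotropy_bounded_representatives[of N A B]) blast
  define M where "M = \<lceil>P * C + C / (1 - \<rho>) + 1\<rceil>"
  define F where "F = (\<lambda>(j, k). gclass N A B j k) ` ({..<N} \<times> {-M..M})"
  have "F \<subseteq> GB N A B"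
    by (auto simp: F_def GB_def)
  moreover have "finite F"
    by (simp add: F_def)
  moreover have "\<exists>l0. \<forall>l\<ge>l0. \<forall>\<mu>\<in>paths_from N A i l. gclass N A B (res_vertex i \<mu>) (path_res A B k \<mu>) \<in> F"
    if "i < N" for i k
  proof -
    obtain l0 where l0: "\<forall>l\<ge>l0. real_of_int \<bar>k\<bar> * (C * \<rho> ^ l) \<le> 1"
      using eventually_geometric_le_1[OF C(2,3), of "real_of_int \<bar>k\<bar> * C"]
      by (auto simp: eventually_sequentially mult.assoc)
    have "gclass N A B (res_vertex i \<mu>) (path_res A B k \<mu>) \<in> F"
      if "l0 \<le> l" and \<mu>: "\<mu> \<in> paths_from N A i l" for l \<mu>
    proof -
      obtain k' where k': "real_of_int \<bar>k'\<bar> \<le> P * C + C / (1 - \<rho>) + 1"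
        "gclass N A B (res_vertex i \<mu>) k' = gclass N A B (res_vertex i \<mu>) (path_res A B k \<mu>)"
        using restriction_has_bounded_representative[OF decay _ C(2,3) \<open>0 \<le> P\<close> reps \<mu>] l0 C
          \<open>l0 \<le> l\<close> by fastforce
      then have "real_of_int \<bar>k'\<bar> \<le> real_of_int M"
        unfolding M_def using le_of_int_ceiling order_trans by blast
      then have "k' \<in> {-M..M}"
        by (simp add: abs_le_iff)
      moreover have "res_vertex i \<mu> < N"
        using res_vertex_less[OF \<mu> \<open>i < N\<close>] .
      ultimately show ?thesis
        unfolding F_def using k'(2) by (intro rev_image_eqI[of "(res_vertex i \<mu>, k')"]) simp_all
    qed
    then show ?thesis by blast
  qed
  ultimately show ?thesis
    unfolding contracting_def by blast
qed

lemma contracting_iff_cycles_shrink: "contracting N A B \<longleftrightarrow> cycles_shrink N A B"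
  using contracting_imp_cycles_shrink cycles_shrink_imp_contracting by blast

theorem corollary3p2:
  assumes "katsura_pair N A B"
  shows "contracting N A B \<longleftrightarrow>
    limsup (\<lambda>n. ereal (root n (max_ratio N A B n))) < 1"
  by (simp add: contracting_iff_cycles_shrink limsup_root_max_ratio_lt_1_iff)

end
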